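(* Consider the theory of equality with uninterpreted functions (EUF). Let $G$ be a finite set of EUF predicates and $m := |\mathit{terms}(G)|$. Then $D_T(G) \le 3m$; that is, for every subset $G' \subseteq G$ and every integer $N \ge 3m$, the saturation procedure $\mathrm{Sat}_N(G')$ returns UNSATISFIABLE if and only if $G'$ is unsatisfiable in EUF.
   Context: EUF terms are variables or applications $f(t_1,\dots,t_n)$ of uninterpreted function symbols to terms; EUF predicates are $t_1 = t_2$ or $t_1 \neq t_2$ for terms $t_1,t_2$. $\mathit{terms}(\phi)$ is the set of syntactically distinct subterms occurring in $\phi$ (e.g. $\mathit{terms}(f(h(x))) = \{x, h(x), f(h(x))\}$), and $\mathit{terms}(G)$ is the union over $g\in G$. The inference rules are: from $X=Y$ derive $Y=X$; from $X=Y$ and $Y=Z$ derive $X=Z$; from $X=Y$ and $X\neq Y$ derive $\bot$; from $X_1=Y_1,\dots,X_n=Y_n$ derive $f(X_1,\dots,X_n)=f(Y_1,\dots,Y_n)$. When run on an input set $H$, only equalities between terms in $\mathit{terms}(H)$ are derived. Saturation procedure $\mathrm{Sat}_N(H)$: (1) $W := H$. (2) Repeat $N$ times: $W' := W$; for every predicate $g\notin W'$ derivable in one rule application from predicates all in $W'$, add $g$ to $W$. (3) Return UNSATISFIABLE if $\bot$ is derivable in one rule application from predicates in $W$, else SATISFIABLE. $D_T(G)$ denotes the maximum over $G'\subseteq G$ of the least number $d$ such that $\mathrm{Sat}_N(G')$ correctly decides satisfiability of $G'$ for all $N\ge d$.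
   Formalization: The inference rules of the saturation procedure also include reflexivity, deriving $X=X$ for every term X in terms(H), besides symmetry, transitivity, contradiction and congruence. The statement above fails without it. *)

theory Defs
  imports Main
begin

datatype ('v, 'f) trm = Var 'v | App 'f "('v, 'f) trm list"

datatype ('v, 'f) pred = Eq "('v, 'f) trm" "('v, 'f) trm"
                       | Neq "('v, 'f) trm" "('v, 'f) trm"

fun subterms :: "('v, 'f) trm \<Rightarrow> ('v, 'f) trm set" where
  "subterms (Var x) = {Var x}"
| "subterms (App f ts) = insert (App f ts) (\<Union> (subterms ` set ts))"

fun pred_terms :: "('v, 'f) pred \<Rightarrow> ('v, 'f) trm set" where
  "pred_terms (Eq s t) = subterms s \<union> subterms t"
| "pred_terms (Neq s t) = subterms s \<union> subterms t"

definition terms :: "('v, 'f) pred set \<Rightarrow> ('v, 'f) trm set" where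
  "terms G = (\<Union> g\<in>G. pred_terms g)"

fun eval :: "('f \<Rightarrow> 'd list \<Rightarrow> 'd) \<Rightarrow> ('v \<Rightarrow> 'd) \<Rightarrow> ('v, 'f) trm \<Rightarrow> 'd" where
  "eval I \<sigma> (Var x) = \<sigma> x"
| "eval I \<sigma> (App f ts) = I f (map (eval I \<sigma>) ts)"

fun holds :: "('f \<Rightarrow> 'd list \<Rightarrow> 'd) \<Rightarrow> ('v \<Rightarrow> 'd) \<Rightarrow> ('v, 'f) pred \<Rightarrow> bool" where
  "holds I \<sigma> (Eq s t) = (eval I \<sigma> s = eval I \<sigma> t)"
| "holds I \<sigma> (Neq s t) = (eval I \<sigma> s \<noteq> eval I \<sigma> t)"

definition sat_in :: "'d itself \<Rightarrow> ('v, 'f) pred set \<Rightarrow> bool" where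
  "sat_in _ G = (\<exists>(I :: 'f \<Rightarrow> 'd list \<Rightarrow> 'd) (\<sigma> :: 'v \<Rightarrow> 'd). \<forall>g\<in>G. holds I \<sigma> g)"

text \<open>The domain is fixed to the (infinite) type of terms;
  since every finite satisfiable set of EUF literals has a finite model, which
  embeds into any infinite domain, this agrees with satisfiability over an
  arbitrary domain.\<close>
definition euf_satisfiable :: "('v, 'f) pred set \<Rightarrow> bool" where
  "euf_satisfiable G = sat_in TYPE(('v, 'f) trm) G"

text \<open>One rule application deriving an equality from premises in W, when the
  procedure is run on input H: only equalities between terms of terms(H) are
  derived.\<close>
inductive derivable1 :: "('v, 'f) pred set \<Rightarrow> ('v, 'f) pred set \<Rightarrow> ('v, 'f) pred \<Rightarrow> bool"
  for H W where
  refl:  "X \<in> terms H \<Longrightarrow> derivable1 H W (Eq X X)"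
| sym:   "Eq X Y \<in> W \<Longrightarrow> X \<in> terms H \<Longrightarrow> Y \<in> terms H \<Longrightarrow> derivable1 H W (Eq Y X)"
| trans: "Eq X Y \<in> W \<Longrightarrow> Eq Y Z \<in> W \<Longrightarrow> X \<in> terms H \<Longrightarrow> Z \<in> terms H
          \<Longrightarrow> derivable1 H W (Eq X Z)"
| cong:  "length Xs = length Ys \<Longrightarrow> (\<forall>i<length Xs. Eq (Xs ! i) (Ys ! i) \<in> W)
          \<Longrightarrow> App f Xs \<in> terms H \<Longrightarrow> App f Ys \<in> terms H
          \<Longrightarrow> derivable1 H W (Eq (App f Xs) (App f Ys))"

text \<open>The working set after k rounds of Sat_N(H).\<close>
fun sat_iter :: "nat \<Rightarrow> ('v, 'f) pred set \<Rightarrow> ('v, 'f) pred set" where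
  "sat_iter 0 H = H"
| "sat_iter (Suc k) H =
     (let W' = sat_iter k H in W' \<union> {g. g \<notin> W' \<and> derivable1 H W' g})"

definition bot_derivable :: "('v, 'f) pred set \<Rightarrow> bool" where
  "bot_derivable W = (\<exists>X Y. Eq X Y \<in> W \<and> Neq X Y \<in> W)"

text \<open>Sat_N(H) returns UNSATISFIABLE.\<close>
definition Sat_unsat :: "nat \<Rightarrow> ('v, 'f) pred set \<Rightarrow> bool" where
  "Sat_unsat N H = bot_derivable (sat_iter N H)"

end

(*
  Soundness: every rule preserves truth in every model, and disequalities are never derived.

  Completeness: keep an equivalence relation P on terms(G) all of whose pairs are already
  derived. Initially P is the identity, derived in round 1 by reflexivity. While P is not closed
  under the input equalities and congruence, the next round derives some a = b and b = a with
  (a, b) not in P, and two rounds of transitivity then derive every equation between the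
  classes of a and b. So merging two classes costs three rounds, and after at most m - 1 merges,
  by round 3m - 2, P is a congruence containing the input equalities. If no input disequality
  relates two P-equivalent terms, the quotient term model satisfies G.
*)
theory Submission
  imports Defs
begin

lemma subterms_refl: "t \<in> subterms t"
  by (cases t) auto

lemma subterms_trans: "s \<in> subterms t \<Longrightarrow> subterms s \<subseteq> subterms t"
  by (induction t) auto

lemma finite_terms: "finite G \<Longrightarrow> finite (terms G)"
proof -
  have "finite (subterms t)" for t :: "('v, 'f) trm"
    by (induction t) auto
  then show "finite G \<Longrightarrow> finite (terms G)"
    unfolding terms_def by (metis finite_UN finite_Un pred_terms.elims)
qed

lemma terms_mono: "G' \<subseteq> G \<Longrightarrow> terms G' \<subseteq> terms G"
  unfolding terms_def by auto

lemma subterms_subset_terms: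
  assumes "s \<in> terms H"
  shows "subterms s \<subseteq> terms H"
proof -
  from assms obtain g where "g \<in> H" "s \<in> pred_terms g"
    unfolding terms_def by blast
  then have "subterms s \<subseteq> pred_terms g"
    by (cases g) (auto dest: subterms_trans)
  with \<open>g \<in> H\<close> show ?thesis
    unfolding terms_def by blast
qed

lemma App_arg_in_terms: "App f ts \<in> terms H \<Longrightarrow> t \<in> set ts \<Longrightarrow> t \<in> terms H"
  using subterms_subset_terms subterms_refl by fastforce

lemma Eq_in_terms: "Eq s t \<in> H \<Longrightarrow> s \<in> terms H \<and> t \<in> terms H"
  unfolding terms_def using subterms_refl by fastforce

lemma Neq_in_terms: "Neq s t \<in> H \<Longrightarrow> s \<in> terms H \<and> t \<in> terms H"
  unfolding terms_def using subterms_refl by fastforce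

lemma sat_iter_Suc_eq:
  "sat_iter (Suc k) H = sat_iter k H \<union> Collect (derivable1 H (sat_iter k H))"
  by (auto simp: Let_def)

declare sat_iter.simps(2) [simp del]

lemma sat_iter_mono: "k \<le> k' \<Longrightarrow> sat_iter k H \<subseteq> sat_iter k' H"
  by (induction k' rule: dec_induct) (auto simp: sat_iter_Suc_eq)

lemma input_subset_sat_iter: "H \<subseteq> sat_iter k H"
  using sat_iter_mono[of 0 k H] by simp

lemma Neq_in_sat_iter_iff: "Neq X Y \<in> sat_iter k H \<longleftrightarrow> Neq X Y \<in> H"
  by (induction k) (auto simp: sat_iter_Suc_eq elim: derivable1.cases)

lemma eval_eq_if_Eq_in_sat_iter:
  assumes "\<forall>g\<in>H. holds I \<sigma> g" and "Eq X Y \<in> sat_iter k H"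
  shows "eval I \<sigma> X = eval I \<sigma> Y"
  using assms(2)
proof (induction k arbitrary: X Y)
  case 0
  with assms(1) show ?case by fastforce
next
  case (Suc k)
  from Suc.prems consider "Eq X Y \<in> sat_iter k H" | "derivable1 H (sat_iter k H) (Eq X Y)"
    by (auto simp: sat_iter_Suc_eq)
  then show ?case
  proof cases
    case 1
    then show ?thesis by (rule Suc.IH)
  next
    case 2
    then show ?thesis
    proof cases
      case refl
      then show ?thesis by simp
    next
      case sym
      then show ?thesis using Suc.IH by metis
    next
      case (trans Z)
      then show ?thesis using Suc.IH by metis
    next
      case (cong Xs Ys f)
      then have "map (eval I \<sigma>) Xs = map (eval I \<sigma>) Ys"
        using Suc.IH by (auto intro: nth_equalityI)
      with cong show ?thesis by simp
    qed
  qed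
qed

lemma unsatisfiable_if_Sat_unsat:
  fixes H :: "('v, 'f) pred set"
  assumes "Sat_unsat N H"
  shows "\<not> sat_in TYPE('d) H"
proof
  assume "sat_in TYPE('d) H"
  then obtain I :: "'f \<Rightarrow> 'd list \<Rightarrow> 'd" and \<sigma> where model: "\<forall>g\<in>H. holds I \<sigma> g"
    unfolding sat_in_def by blast
  from assms obtain X Y where "Eq X Y \<in> sat_iter N H" "Neq X Y \<in> H"
    unfolding Sat_unsat_def bot_derivable_def Neq_in_sat_iter_iff by blast
  with model show False
    using eval_eq_if_Eq_in_sat_iter[OF model] by force
qed

definition derived_eqs :: "nat \<Rightarrow> ('v, 'f) pred set \<Rightarrow> ('v, 'f) trm rel" where
  "derived_eqs k H = {(X, Y). Eq X Y \<in> sat_iter k H}"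

lemma derived_eqs_mono: "k \<le> k' \<Longrightarrow> derived_eqs k H \<subseteq> derived_eqs k' H"
  unfolding derived_eqs_def using sat_iter_mono by blast

lemma Id_on_terms_subset_derived_eqs: "Id_on (terms H) \<subseteq> derived_eqs 1 H"
  by (auto simp: derived_eqs_def sat_iter_Suc_eq intro: derivable1.refl)

lemma input_in_derived_eqs: "Eq X Y \<in> H \<Longrightarrow> (X, Y) \<in> derived_eqs k H"
  unfolding derived_eqs_def using input_subset_sat_iter by blast

lemma derived_eqs_sym:
  "(X, Y) \<in> derived_eqs k H \<Longrightarrow> X \<in> terms H \<Longrightarrow> Y \<in> terms H
    \<Longrightarrow> (Y, X) \<in> derived_eqs (Suc k) H"
  by (auto simp: derived_eqs_def sat_iter_Suc_eq intro: derivable1.sym)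

lemma derived_eqs_trans:
  "(X, Y) \<in> derived_eqs k H \<Longrightarrow> (Y, Z) \<in> derived_eqs k H \<Longrightarrow> X \<in> terms H \<Longrightarrow> Z \<in> terms H
    \<Longrightarrow> (X, Z) \<in> derived_eqs (Suc k) H"
  by (auto simp: derived_eqs_def sat_iter_Suc_eq intro: derivable1.trans)

lemma derived_eqs_cong:
  "list_all2 (\<lambda>X Y. (X, Y) \<in> derived_eqs k H) Xs Ys \<Longrightarrow> App f Xs \<in> terms H \<Longrightarrow> App f Ys \<in> terms H
    \<Longrightarrow> (App f Xs, App f Ys) \<in> derived_eqs (Suc k) H"
  by (auto simp: derived_eqs_def sat_iter_Suc_eq list_all2_conv_all_nth intro: derivable1.cong)

definition congruence_closed :: "('v, 'f) pred set \<Rightarrow> ('v, 'f) trm rel \<Rightarrow> bool" where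
  "congruence_closed H P \<longleftrightarrow>
     (\<forall>s t. Eq s t \<in> H \<longrightarrow> (s, t) \<in> P) \<and>
     (\<forall>f Xs Ys. App f Xs \<in> terms H \<longrightarrow> App f Ys \<in> terms H \<longrightarrow>
        list_all2 (\<lambda>X Y. (X, Y) \<in> P) Xs Ys \<longrightarrow> (App f Xs, App f Ys) \<in> P)"

definition class_rep :: "'a rel \<Rightarrow> 'a \<Rightarrow> 'a" where
  "class_rep P X = (SOME Z. Z \<in> P``{X})"

lemma class_rep_eq_iff:
  assumes "equiv A P" "X \<in> A" "Y \<in> A"
  shows "class_rep P X = class_rep P Y \<longleftrightarrow> (X, Y) \<in> P"
proof
  have rep: "class_rep P Z \<in> P``{Z}" if "Z \<in> A" for Z
    unfolding class_rep_def using equiv_class_self[OF assms(1) that] by (rule someI)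
  assume "class_rep P X = class_rep P Y"
  then have "class_rep P X \<in> P``{X} \<inter> P``{Y}"
    using rep[OF assms(2)] rep[OF assms(3)] by (metis IntI)
  then show "(X, Y) \<in> P"
    using equiv_class_nondisjoint[OF assms(1)] by blast
next
  assume "(X, Y) \<in> P"
  then show "class_rep P X = class_rep P Y"
    unfolding class_rep_def using equiv_class_eq[OF assms(1)] by simp
qed

(* The choice of argument list does not matter on terms(H) once P is congruence closed. *)
definition quotient_interp ::
  "('v, 'f) trm set \<Rightarrow> ('v, 'f) trm rel \<Rightarrow> 'f \<Rightarrow> ('v, 'f) trm list \<Rightarrow> ('v, 'f) trm" where
  "quotient_interp T P f rs = class_rep P (App f (SOME ts. App f ts \<in> T \<and> map (class_rep P) ts = rs))"

lemma eval_quotient_interp: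
  assumes P: "equiv (terms H) P" "congruence_closed H P" and "t \<in> terms H"
  shows "eval (quotient_interp (terms H) P) (\<lambda>x. class_rep P (Var x)) t = class_rep P t"
  using assms(3)
proof (induction t)
  case (Var x)
  show ?case by simp
next
  case (App f ts)
  have args: "set ts \<subseteq> terms H"
    using App_arg_in_terms[OF App.prems] by blast
  define ts' where "ts' = (SOME ts'. App f ts' \<in> terms H \<and> map (class_rep P) ts' = map (class_rep P) ts)"
  have "\<exists>ts'. App f ts' \<in> terms H \<and> map (class_rep P) ts' = map (class_rep P) ts"
    using App.prems by blast
  then have ts': "App f ts' \<in> terms H \<and> map (class_rep P) ts' = map (class_rep P) ts"
    unfolding ts'_def by (rule someI_ex)
  have "list_all2 (\<lambda>X Y. (X, Y) \<in> P) ts' ts"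
    unfolding list_all2_conv_all_nth
  proof (intro conjI allI impI)
    show "length ts' = length ts"
      using ts' map_eq_imp_length_eq by blast
    fix i assume "i < length ts'"
    with ts' have "class_rep P (ts' ! i) = class_rep P (ts ! i)" "ts' ! i \<in> terms H" "ts ! i \<in> terms H"
      using App_arg_in_terms[of f ts' H] args by (auto simp: map_equality_iff)
    then show "(ts' ! i, ts ! i) \<in> P"
      using class_rep_eq_iff[OF P(1)] by blast
  qed
  then have "(App f ts', App f ts) \<in> P"
    using P(2) ts' App.prems unfolding congruence_closed_def by blast
  then have rep_eq: "class_rep P (App f ts') = class_rep P (App f ts)"
    using class_rep_eq_iff[OF P(1)] ts' App.prems by blast
  have args_eval: "map (eval (quotient_interp (terms H) P) (\<lambda>x. class_rep P (Var x))) ts = map (class_rep P) ts"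
    using App.IH args by auto
  have "eval (quotient_interp (terms H) P) (\<lambda>x. class_rep P (Var x)) (App f ts)
      = quotient_interp (terms H) P f (map (class_rep P) ts)"
    by (simp only: eval.simps args_eval)
  also have "\<dots> = class_rep P (App f ts')"
    unfolding quotient_interp_def ts'_def ..
  finally show ?case
    using rep_eq by simp
qed

lemma euf_satisfiable_if_congruence_closed:
  assumes P: "equiv (terms H) P" "congruence_closed H P"
    and Neq_separated: "\<forall>s t. Neq s t \<in> H \<longrightarrow> (s, t) \<notin> P"
  shows "euf_satisfiable H"
proof -
  let ?I = "quotient_interp (terms H) P" and ?\<sigma> = "\<lambda>x. class_rep P (Var x)"
  have "holds ?I ?\<sigma> g" if "g \<in> H" for g
  proof (cases g)
    case (Eq s t)
    with that have "s \<in> terms H" "t \<in> terms H" "(s, t) \<in> P"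
      using Eq_in_terms P(2) unfolding congruence_closed_def by blast+
    with Eq show ?thesis
      by (simp add: eval_quotient_interp[OF P] class_rep_eq_iff[OF P(1)])
  next
    case (Neq s t)
    with that have "s \<in> terms H" "t \<in> terms H" "(s, t) \<notin> P"
      using Neq_in_terms Neq_separated by blast+
    with Neq show ?thesis
      by (simp add: eval_quotient_interp[OF P] class_rep_eq_iff[OF P(1)])
  qed
  then show ?thesis
    unfolding euf_satisfiable_def sat_in_def by blast
qed

lemma card_quotient_le: "finite A \<Longrightarrow> card (A // P) \<le> card A"
  unfolding proj_image[symmetric] by (rule card_image_le)

lemma card_quotient_less_if_refines:
  assumes "finite A" "equiv A R" "equiv A S" "R \<subseteq> S" "(a, b) \<in> S" "(a, b) \<notin> R"
  shows "card (A // S) < card (A // R)"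
proof -
  have ab: "a \<in> A" "b \<in> A"
    using assms(3,5) equiv_type by blast+
  have "R``{a} \<noteq> R``{b}"
    using eq_equiv_class_iff[OF assms(2) ab] assms(6) by blast
  moreover have "S``(R``{a}) = S``(R``{b})"
    using refines_equiv_class_eq2[OF assms(4,2,3)] equiv_class_eq[OF assms(3,5)] by simp
  moreover have "R``{a} \<in> A // R" "R``{b} \<in> A // R"
    using ab by (auto intro: quotientI)
  ultimately have "\<not> inj_on (\<lambda>X. S``X) (A // R)"
    unfolding inj_on_def by blast
  moreover have fin: "finite (A // R)"
    using finite_quotient[OF assms(1) equiv_type[OF assms(2)]] .
  ultimately have "card ((\<lambda>X. S``X) ` (A // R)) \<noteq> card (A // R)"
    using inj_on_iff_eq_card by blast
  moreover have "card ((\<lambda>X. S``X) ` (A // R)) \<le> card (A // R)"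
    using card_image_le[OF fin] .
  ultimately show ?thesis
    unfolding refines_equiv_image_eq[OF assms(4,2,3)] by linarith
qed

definition merge_classes :: "'a rel \<Rightarrow> 'a \<Rightarrow> 'a \<Rightarrow> 'a rel" where
  "merge_classes P a b = P \<union> (P``{a} \<union> P``{b}) \<times> (P``{a} \<union> P``{b})"

lemma equiv_merge_classes:
  assumes "equiv A P"
  shows "equiv A (merge_classes P a b)"
proof (rule equivI)
  show "merge_classes P a b \<subseteq> A \<times> A"
    using equiv_type[OF assms] unfolding merge_classes_def by blast
  show "refl_on A (merge_classes P a b)"
    using assms unfolding merge_classes_def equiv_def refl_on_def by blast
  show "sym (merge_classes P a b)"
    using assms unfolding merge_classes_def equiv_def sym_def by blast
  show "trans (merge_classes P a b)"
    using assms unfolding merge_classes_def equiv_def sym_def trans_def by blast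
qed

lemma card_quotient_merge_classes:
  assumes "finite A" "equiv A P" "a \<in> A" "b \<in> A" "(a, b) \<notin> P"
  shows "card (A // merge_classes P a b) < card (A // P)"
proof (rule card_quotient_less_if_refines[OF assms(1,2) equiv_merge_classes[OF assms(2)]])
  show "P \<subseteq> merge_classes P a b"
    unfolding merge_classes_def by blast
  show "(a, b) \<in> merge_classes P a b" "(a, b) \<notin> P"
    using assms(2-5) equiv_class_self unfolding merge_classes_def by fast+
qed

lemma merge_classes_subset_derived_eqs:
  assumes P: "equiv (terms H) P" "P \<subseteq> derived_eqs k H"
    and ab: "(a, b) \<in> derived_eqs (Suc k) H" "(b, a) \<in> derived_eqs (Suc k) H"
  shows "merge_classes P a b \<subseteq> derived_eqs (k + 3) H"
proof
  have bridge: "(X, Y) \<in> derived_eqs (k + 3) H"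
    if "(X, u) \<in> P" "(u, v) \<in> derived_eqs (Suc k) H" "(v, Y) \<in> P" for X Y u v
  proof -
    have terms: "X \<in> terms H" "v \<in> terms H" "Y \<in> terms H"
      using that(1,3) equiv_type[OF P(1)] by blast+
    have "(X, u) \<in> derived_eqs (Suc k) H" "(v, Y) \<in> derived_eqs (Suc (Suc k)) H"
      using that(1,3) P(2) derived_eqs_mono[of k] by (meson le_SucI order_refl subsetD)+
    then have "(X, v) \<in> derived_eqs (Suc (Suc k)) H"
      using that(2) terms derived_eqs_trans by blast
    then have "(X, Y) \<in> derived_eqs (Suc (Suc (Suc k))) H"
      using \<open>(v, Y) \<in> derived_eqs (Suc (Suc k)) H\<close> terms derived_eqs_trans by blast
    then show ?thesis
      by (simp add: numeral_3_eq_3)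
  qed
  fix p assume "p \<in> merge_classes P a b"
  then obtain X Y where p: "p = (X, Y)" and
    "(X, Y) \<in> P \<or> (a, X) \<in> P \<and> (b, Y) \<in> P \<or> (b, X) \<in> P \<and> (a, Y) \<in> P"
    using P(1) unfolding merge_classes_def equiv_def sym_def trans_def by blast
  then consider "(X, Y) \<in> P" | "(X, a) \<in> P" "(b, Y) \<in> P" | "(X, b) \<in> P" "(a, Y) \<in> P"
    using P(1) unfolding equiv_def sym_def by blast
  then show "p \<in> derived_eqs (k + 3) H"
  proof cases
    case 1
    then show ?thesis
      using p P(2) derived_eqs_mono[of k "k + 3"] by auto
  next
    case 2
    then show ?thesis
      using p ab(1) bridge by blast
  next
    case 3
    then show ?thesis
      using p ab(2) bridge by blast
  qed
qed

lemma new_derived_eq_if_not_congruence_closed: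
  assumes P: "equiv (terms H) P" "P \<subseteq> derived_eqs k H" and "\<not> congruence_closed H P"
  obtains a b where "a \<in> terms H" "b \<in> terms H" "(a, b) \<notin> P"
    "(a, b) \<in> derived_eqs (Suc k) H" "(b, a) \<in> derived_eqs (Suc k) H"
proof -
  consider s t where "Eq s t \<in> H" "(s, t) \<notin> P"
    | f Xs Ys where "App f Xs \<in> terms H" "App f Ys \<in> terms H"
        "list_all2 (\<lambda>X Y. (X, Y) \<in> P) Xs Ys" "(App f Xs, App f Ys) \<notin> P"
    using assms(3) unfolding congruence_closed_def by blast
  then show ?thesis
  proof cases
    case (1 s t)
    then have st: "s \<in> terms H" "t \<in> terms H"
      using Eq_in_terms by blast+
    have "(s, t) \<in> derived_eqs k H"
      using 1(1) by (rule input_in_derived_eqs)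
    from that[OF st 1(2) input_in_derived_eqs[OF 1(1)] derived_eqs_sym[OF this st]]
    show ?thesis .
  next
    case (2 f Xs Ys)
    have "sym P"
      using P(1) by (rule equivE)
    have derived: "(X, Y) \<in> derived_eqs k H" "(Y, X) \<in> derived_eqs k H" if XY: "(X, Y) \<in> P" for X Y
      using XY symD[OF \<open>sym P\<close> XY] P(2) by blast+
    have "list_all2 (\<lambda>X Y. (X, Y) \<in> derived_eqs k H) Xs Ys"
      "list_all2 (\<lambda>X Y. (X, Y) \<in> derived_eqs k H) Ys Xs"
      using 2(3) derived by (auto simp: list_all2_conv_all_nth)
    from that[OF 2(1,2,4) derived_eqs_cong[OF this(1) 2(1,2)] derived_eqs_cong[OF this(2) 2(2,1)]]
    show ?thesis .
  qed
qed

lemma derived_equiv_after_stages: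
  assumes "finite (terms H)"
  shows "\<exists>P. equiv (terms H) P \<and> P \<subseteq> derived_eqs (3 * j + 1) H \<and>
           (congruence_closed H P \<or> card (terms H // P) + j \<le> card (terms H))"
proof (induction j)
  case 0
  have "equiv (terms H) (Id_on (terms H))"
    by (rule equivI) (auto simp: refl_on_Id_on)
  with Id_on_terms_subset_derived_eqs card_quotient_le[OF assms] show ?case
    by fastforce
next
  case (Suc j)
  then obtain P where P: "equiv (terms H) P" "P \<subseteq> derived_eqs (3 * j + 1) H"
    and closed_or_few: "congruence_closed H P \<or> card (terms H // P) + j \<le> card (terms H)"
    by blast
  show ?case
  proof (cases "congruence_closed H P")
    case True
    with P show ?thesis
      using derived_eqs_mono[of "3 * j + 1" "3 * Suc j + 1"] by auto
  next
    case False
    then obtain a b where ab: "a \<in> terms H" "b \<in> terms H" "(a, b) \<notin> P"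
      "(a, b) \<in> derived_eqs (Suc (3 * j + 1)) H" "(b, a) \<in> derived_eqs (Suc (3 * j + 1)) H"
      using new_derived_eq_if_not_congruence_closed[OF P] by blast
    have "merge_classes P a b \<subseteq> derived_eqs (3 * Suc j + 1) H"
      using merge_classes_subset_derived_eqs[OF P ab(4,5)] by simp
    moreover have "card (terms H // merge_classes P a b) + Suc j \<le> card (terms H)"
      using card_quotient_merge_classes[OF assms P(1) ab(1-3)] closed_or_few False by linarith
    ultimately show ?thesis
      using equiv_merge_classes[OF P(1)] by blast
  qed
qed

lemma congruence_closure_derived:
  assumes "finite (terms H)"
  obtains P where "equiv (terms H) P" "congruence_closed H P"
    "P \<subseteq> derived_eqs (3 * card (terms H) - 2) H"
proof -
  obtain P where P: "equiv (terms H) P" "P \<subseteq> derived_eqs (3 * (card (terms H) - 1) + 1) H"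
    and closed_or_few: "congruence_closed H P \<or> card (terms H // P) + (card (terms H) - 1) \<le> card (terms H)"
    using derived_equiv_after_stages[OF assms] by blast
  have closed: "congruence_closed H P"
  proof (rule ccontr)
    assume "\<not> congruence_closed H P"
    then obtain a b where "a \<in> terms H" "b \<in> terms H" "(a, b) \<notin> P"
      using new_derived_eq_if_not_congruence_closed[OF P] by blast
    then have "card {P``{a}, P``{b}} = 2" "{P``{a}, P``{b}} \<subseteq> terms H // P"
      using eq_equiv_class_iff[OF P(1)] by (auto intro: quotientI)
    then have "2 \<le> card (terms H // P)"
      using card_mono finite_quotient[OF assms equiv_type[OF P(1)]] by metis
    moreover have "card (terms H) \<noteq> 0"
      using \<open>a \<in> terms H\<close> assms by auto
    ultimately show False
      using closed_or_few \<open>\<not> congruence_closed H P\<close> by linarith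
  qed
  have "P \<subseteq> derived_eqs (3 * card (terms H) - 2) H"
  proof (cases "terms H = {}")
    case True
    then show ?thesis
      using equiv_type[OF P(1)] by blast
  next
    case False
    then have "card (terms H) > 0"
      using assms card_gt_0_iff by blast
    then have "3 * (card (terms H) - 1) + 1 = 3 * card (terms H) - 2"
      by linarith
    with P(2) show ?thesis
      by simp
  qed
  with P(1) closed that show ?thesis
    by blast
qed

lemma Sat_unsat_if_unsatisfiable:
  assumes "finite (terms H)" "\<not> euf_satisfiable H" "3 * card (terms H) - 2 \<le> N"
  shows "Sat_unsat N H"
proof -
  obtain P where P: "equiv (terms H) P" "congruence_closed H P"
    and derived: "P \<subseteq> derived_eqs (3 * card (terms H) - 2) H"
    using congruence_closure_derived[OF assms(1)] by blast
  from assms(2) obtain s t where "Neq s t \<in> H" "(s, t) \<in> P"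
    using euf_satisfiable_if_congruence_closed[OF P] by blast
  moreover have "P \<subseteq> derived_eqs N H"
    using derived derived_eqs_mono[OF assms(3)] by blast
  ultimately show ?thesis
    unfolding Sat_unsat_def bot_derivable_def derived_eqs_def
    using input_subset_sat_iter by blast
qed

theorem proposition3p9:
  fixes G :: "('v, 'f) pred set"
  assumes "finite G"
  shows "\<forall>G' N. G' \<subseteq> G \<and> N \<ge> 3 * card (terms G) \<longrightarrow>
           (Sat_unsat N G' \<longleftrightarrow> \<not> euf_satisfiable G')"
proof (intro allI impI)
  fix G' :: "('v, 'f) pred set" and N
  assume "G' \<subseteq> G \<and> N \<ge> 3 * card (terms G)"
  then have sub: "terms G' \<subseteq> terms G" and N: "3 * card (terms G) \<le> N"
    using terms_mono by auto
  have "finite (terms G')"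
    using finite_subset[OF sub finite_terms[OF assms]] .
  moreover have "3 * card (terms G') - 2 \<le> N"
    using card_mono[OF finite_terms[OF assms] sub] N by linarith
  ultimately show "Sat_unsat N G' \<longleftrightarrow> \<not> euf_satisfiable G'"
    using Sat_unsat_if_unsatisfiable unsatisfiable_if_Sat_unsat
    unfolding euf_satisfiable_def by blast
qed

end
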